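(* On $\ell^2$ (real square-summable sequences, with canonical Hilbert basis $e_1,e_2,\dots$) define for $n=0,1,2,\dots$ the operator $A_n$ with domain $D(A_n)=\{(x_j)_{j\ge1}\in\ell^2:\sum_j j^2|x_j|^2<\infty\}$ by $A_ne_j=je_j$ for $j\neq n$ and $A_ne_n=-ne_n$ (so $A_0e_j=je_j$ for all $j$). Then each $A_n\in\mathcal S$, $\gamma(A_n,A_0)\to0$, but $\rho(A_n,A_0)\not\to 0$; more precisely, for any $\alpha\in\mathcal A$ with $\alpha(\lambda)=1$ for $\lambda$ sufficiently large and $\alpha(\lambda)=0$ for $\lambda$ sufficiently negative, $\|\alpha(A_n)-\alpha(A_0)\|=1$ for all sufficiently large $n$. In particular the identity map $(\mathcal S,\gamma)\to(\mathcal S,\rho)$ is not continuous.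
   Context: $\mathcal S$ denotes the set of densely defined selfadjoint operators on a separable real Hilbert space (operators extended complex-linearly to the complexification when needed). Riesz map $\Psi(A)=A(1+A^2)^{-1/2}$, Riesz metric $\rho(A_0,A_1)=\|\Psi(A_0)-\Psi(A_1)\|$, gap metric $\gamma(A_0,A_1)=\|(\mathbf i+A_0)^{-1}-(\mathbf i+A_1)^{-1}\|+\|(\mathbf i-A_0)^{-1}-(\mathbf i-A_1)^{-1}\|$. $\mathcal A$ is the $C^*$-algebra of continuous $f:\mathbb R\to\mathbb C$ for which both limits at $\pm\infty$ exist; $f(A)$ is defined by functional calculus. *)

theory Defs
  imports Complex_Main
begin

type_synonym rseq = "nat \<Rightarrow> real"
type_synonym cseq = "nat \<Rightarrow> complex"

text \<open>Index j :: nat corresponds to the paper's basis vector e_(j+1).\<close>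

definition rell2 :: "rseq set" where
  "rell2 = {x. summable (\<lambda>j. (x j)^2)}"

definition rinner :: "rseq \<Rightarrow> rseq \<Rightarrow> real" where
  "rinner x y = (\<Sum>j. x j * y j)"

definition rnorm :: "rseq \<Rightarrow> real" where
  "rnorm x = sqrt (\<Sum>j. (x j)^2)"

definition cell2 :: "cseq set" where
  "cell2 = {z. summable (\<lambda>j. (cmod (z j))^2)}"

definition cinner :: "cseq \<Rightarrow> cseq \<Rightarrow> complex" where
  "cinner x y = (\<Sum>j. x j * cnj (y j))"

definition cnorm :: "cseq \<Rightarrow> real" where
  "cnorm z = sqrt (\<Sum>j. (cmod (z j))^2)"

type_synonym rop = "rseq set \<times> (rseq \<Rightarrow> rseq)"

definition selfadjoint :: "rop \<Rightarrow> bool" where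
  "selfadjoint A \<longleftrightarrow>
     (let D = fst A; T = snd A in
       D \<subseteq> rell2 \<and> (\<forall>x\<in>D. T x \<in> rell2) \<and>
       (\<forall>x\<in>D. \<forall>y\<in>D. \<forall>a b::real. (\<lambda>j. a * x j + b * y j) \<in> D \<and>
            T (\<lambda>j. a * x j + b * y j) = (\<lambda>j. a * T x j + b * T y j)) \<and>
       (\<forall>x\<in>rell2. \<forall>\<epsilon>>0. \<exists>y\<in>D. rnorm (\<lambda>j. x j - y j) < \<epsilon>) \<and>
       (\<forall>x\<in>D. \<forall>y\<in>D. rinner (T x) y = rinner x (T y)) \<and>
       {y\<in>rell2. \<exists>z\<in>rell2. \<forall>x\<in>D. rinner (T x) y = rinner x z} = D)"

definition SA :: "rop set" where
  "SA = {A. selfadjoint A}"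

definition cdom :: "rop \<Rightarrow> cseq set" where
  "cdom A = {z. (\<lambda>j. Re (z j)) \<in> fst A \<and> (\<lambda>j. Im (z j)) \<in> fst A}"

definition cact :: "rop \<Rightarrow> cseq \<Rightarrow> cseq" where
  "cact A z = (\<lambda>j. complex_of_real (snd A (\<lambda>k. Re (z k)) j)
                  + \<i> * complex_of_real (snd A (\<lambda>k. Im (z k)) j))"

definition resolv :: "complex \<Rightarrow> complex \<Rightarrow> rop \<Rightarrow> cseq \<Rightarrow> cseq" where
  "resolv c s A y = (THE x. x \<in> cdom A \<and> (\<lambda>j. c * x j + s * cact A x j) = y)"

definition bounded_cop :: "(cseq \<Rightarrow> cseq) \<Rightarrow> bool" where
  "bounded_cop B \<longleftrightarrow> (\<forall>x\<in>cell2. B x \<in> cell2) \<and>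
     (\<forall>x\<in>cell2. \<forall>y\<in>cell2. \<forall>a b::complex.
        B (\<lambda>j. a * x j + b * y j) = (\<lambda>j. a * B x j + b * B y j)) \<and>
     (\<exists>K. \<forall>x\<in>cell2. cnorm (B x) \<le> K * cnorm x)"

definition copnorm :: "(cseq \<Rightarrow> cseq) \<Rightarrow> real" where
  "copnorm B = (SUP x\<in>{x\<in>cell2. cnorm x \<le> 1}. cnorm (B x))"

definition calg :: "(real \<Rightarrow> complex) set" where
  "calg = {f. continuous_on UNIV f \<and> (\<exists>l. (f \<longlongrightarrow> l) at_top) \<and> (\<exists>l. (f \<longlongrightarrow> l) at_bot)}"

definition supnorm :: "(real \<Rightarrow> complex) \<Rightarrow> real" where
  "supnorm f = (SUP t. cmod (f t))"

text \<open>Such a Phi exists and is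
  unique for A in S; f(A) is its value at f.\<close>
definition is_fc :: "rop \<Rightarrow> ((real \<Rightarrow> complex) \<Rightarrow> cseq \<Rightarrow> cseq) \<Rightarrow> bool" where
  "is_fc A \<Phi> \<longleftrightarrow>
     (\<forall>f\<in>calg. bounded_cop (\<Phi> f) \<and> copnorm (\<Phi> f) \<le> supnorm f) \<and>
     (\<forall>f\<in>calg. \<forall>g\<in>calg. \<forall>x\<in>cell2. \<Phi> (\<lambda>t. f t + g t) x = (\<lambda>j. \<Phi> f x j + \<Phi> g x j)) \<and>
     (\<forall>f\<in>calg. \<forall>c. \<forall>x\<in>cell2. \<Phi> (\<lambda>t. c * f t) x = (\<lambda>j. c * \<Phi> f x j)) \<and>
     (\<forall>f\<in>calg. \<forall>g\<in>calg. \<forall>x\<in>cell2. \<Phi> (\<lambda>t. f t * g t) x = \<Phi> f (\<Phi> g x)) \<and>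
     (\<forall>f\<in>calg. \<forall>x\<in>cell2. \<forall>y\<in>cell2. cinner (\<Phi> f x) y = cinner x (\<Phi> (\<lambda>t. cnj (f t)) y)) \<and>
     (\<forall>x\<in>cell2. \<Phi> (\<lambda>t. 1) x = x) \<and>
     (\<forall>x\<in>cell2. \<Phi> (\<lambda>t. 1 / (\<i> + complex_of_real t)) x = resolv \<i> 1 A x)"

definition fc :: "(real \<Rightarrow> complex) \<Rightarrow> rop \<Rightarrow> cseq \<Rightarrow> cseq" where
  "fc f A x = (THE y. \<exists>\<Phi>. is_fc A \<Phi> \<and> \<Phi> f x = y)"

definition Psi :: "real \<Rightarrow> complex" where
  "Psi t = complex_of_real (t / sqrt (1 + t^2))"

definition riesz_dist :: "rop \<Rightarrow> rop \<Rightarrow> real" where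
  "riesz_dist A0 A1 = copnorm (\<lambda>x j. fc Psi A0 x j - fc Psi A1 x j)"

definition gap_dist :: "rop \<Rightarrow> rop \<Rightarrow> real" where
  "gap_dist A0 A1 =
     copnorm (\<lambda>x j. resolv \<i> 1 A0 x j - resolv \<i> 1 A1 x j)
   + copnorm (\<lambda>x j. resolv \<i> (-1) A0 x j - resolv \<i> (-1) A1 x j)"

definition ev :: "nat \<Rightarrow> nat \<Rightarrow> real" where
  "ev n j = (if Suc j = n then - real (Suc j) else real (Suc j))"

definition Aop :: "nat \<Rightarrow> rop" where
  "Aop n = ({x\<in>rell2. summable (\<lambda>j. (real (Suc j) * x j)^2)}, (\<lambda>x j. ev n j * x j))"

end

(*
  A_n is the diagonal operator with eigenvalues ev n j on the standard basis, and A_n, A_0 differ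
  only in one eigenvalue: n for A_0 and -n for A_n.  Hence f(A_n) - f(A_0) is a rank-one diagonal
  operator of norm |f(-n) - f(n)|.  For the two resolvents this is 2n/(1 + n^2), which tends to 0;
  for the Riesz map it is 2n/sqrt(1 + n^2), which tends to 2; for a function that is 0 near -infinity
  and 1 near +infinity it is eventually 1.

  The functional calculus is only characterised abstractly, so one must show that it acts on a
  diagonal operator as expected.  If e is an eigenvector of the resolvent with eigenvalue r(mu),
  where r t = 1/(i + t), then Phi f e = f(mu) e: up to a uniformly small error, f - f(mu) is a
  multiple h (r - r(mu)) of a function that annihilates e.
*)
theory Submission
  imports Defs "HOL-Real_Asymp.Real_Asymp"
begin

definition unit_seq :: "nat \<Rightarrow> nat \<Rightarrow> 'a::zero_neq_one" where
  "unit_seq k = (\<lambda>j. if j = k then 1 else 0)"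

lemma suminf_single_eq: "(\<Sum>j. if j = k then a else 0) = (a::'a::{t2_space,comm_monoid_add})"
  using sums_single[of k "\<lambda>_. a"] by (simp add: sums_iff)

lemma cinner_scaled_unit_seq: "cinner x (\<lambda>j. c * unit_seq k j) = x k * cnj c"
proof -
  have "(\<lambda>j. x j * cnj (c * unit_seq k j)) = (\<lambda>j. if j = k then x k * cnj c else 0)"
    by (auto simp: unit_seq_def)
  then show ?thesis
    unfolding cinner_def by (simp add: suminf_single_eq)
qed

lemma cinner_unit_seq: "cinner x (unit_seq k) = x k"
  using cinner_scaled_unit_seq[of x 1 k] by simp

lemma cnorm_scaled_unit_seq: "cnorm (\<lambda>j. c * unit_seq k j) = cmod c"
proof -
  have "(\<lambda>j. (cmod (c * unit_seq k j))\<^sup>2) = (\<lambda>j. if j = k then (cmod c)\<^sup>2 else 0)"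
    by (auto simp: unit_seq_def)
  then show ?thesis
    unfolding cnorm_def by (simp add: suminf_single_eq)
qed

lemma unit_seq_cell2: "unit_seq k \<in> cell2"
proof -
  have "(\<lambda>j. (cmod (unit_seq k j))\<^sup>2) = (\<lambda>j. if j = k then 1 else 0)"
    by (auto simp: unit_seq_def)
  then show ?thesis by (simp add: cell2_def)
qed

lemma cnorm_unit_seq: "cnorm (unit_seq k) = 1"
  using cnorm_scaled_unit_seq[of 1 k] by simp

lemma cnorm_nonneg: "z \<in> cell2 \<Longrightarrow> 0 \<le> cnorm z"
  by (simp add: cnorm_def cell2_def suminf_nonneg)

lemma cnorm_eq_0: assumes "z \<in> cell2" "cnorm z = 0" shows "z = (\<lambda>j. 0)"
proof -
  have "summable (\<lambda>j. (cmod (z j))\<^sup>2)" using assms(1) by (simp add: cell2_def)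
  moreover have "(\<Sum>j. (cmod (z j))\<^sup>2) = 0" using assms(2) by (simp add: cnorm_def)
  ultimately have "\<And>j. (cmod (z j))\<^sup>2 = 0" by (simp add: suminf_eq_zero_iff fun_eq_iff)
  then show ?thesis by auto
qed

lemma diag_mult_cell2:
  assumes d: "\<And>j. cmod (d j) \<le> M" and x: "x \<in> cell2"
  shows "(\<lambda>j. d j * x j) \<in> cell2" and "cnorm (\<lambda>j. d j * x j) \<le> M * cnorm x"
proof -
  have M: "0 \<le> M" using d[of 0] norm_ge_zero order_trans by blast
  have sx: "summable (\<lambda>j. M\<^sup>2 * (cmod (x j))\<^sup>2)" using x by (simp add: cell2_def summable_mult)
  have le: "(cmod (d j * x j))\<^sup>2 \<le> M\<^sup>2 * (cmod (x j))\<^sup>2" for j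
    using d[of j] by (simp add: norm_mult power_mult_distrib[symmetric] power_mono mult_right_mono)
  have sdx: "summable (\<lambda>j. (cmod (d j * x j))\<^sup>2)"
    by (rule summable_comparison_test[OF _ sx]) (use le in auto)
  then show "(\<lambda>j. d j * x j) \<in> cell2" by (simp add: cell2_def)
  have "(\<Sum>j. (cmod (d j * x j))\<^sup>2) \<le> M\<^sup>2 * (\<Sum>j. (cmod (x j))\<^sup>2)"
    using suminf_le[OF le sdx sx] x by (simp add: cell2_def suminf_mult)
  then show "cnorm (\<lambda>j. d j * x j) \<le> M * cnorm x"
    unfolding cnorm_def using M real_sqrt_le_mono by (fastforce simp: real_sqrt_mult)
qed

lemma copnorm_cong: "(\<And>x. x \<in> cell2 \<Longrightarrow> B x = B' x) \<Longrightarrow> copnorm B = copnorm B'"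
  unfolding copnorm_def by (rule SUP_cong) auto

lemma copnorm_le:
  assumes "\<And>x. x \<in> cell2 \<Longrightarrow> cnorm x \<le> 1 \<Longrightarrow> cnorm (B x) \<le> M"
  shows "copnorm B \<le> M"
  unfolding copnorm_def using unit_seq_cell2[of 0] cnorm_unit_seq[of 0]
  by (intro cSUP_least) (auto intro: assms)

lemma cnorm_le_copnorm:
  assumes B: "bounded_cop B" and x: "x \<in> cell2" "cnorm x \<le> 1"
  shows "cnorm (B x) \<le> copnorm B"
proof -
  obtain K where K: "\<And>y. y \<in> cell2 \<Longrightarrow> cnorm (B y) \<le> K * cnorm y"
    using B unfolding bounded_cop_def by blast
  have "cnorm (B y) \<le> \<bar>K\<bar>" if "y \<in> cell2" "cnorm y \<le> 1" for y
  proof -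
    have "K * cnorm y \<le> \<bar>K\<bar> * cnorm y"
      using that by (intro mult_right_mono) (auto simp: cnorm_nonneg)
    also have "\<dots> \<le> \<bar>K\<bar>" using that by (simp add: mult_left_le)
    finally show ?thesis using K[OF that(1)] by linarith
  qed
  then have "bdd_above ((\<lambda>y. cnorm (B y)) ` {y\<in>cell2. cnorm y \<le> 1})"
    by (auto intro!: bdd_aboveI2)
  then show ?thesis
    unfolding copnorm_def by (rule cSUP_upper[rotated]) (use x in auto)
qed

lemma bounded_cop_diag_mult:
  assumes "\<And>j. cmod (d j) \<le> M"
  shows "bounded_cop (\<lambda>x j. d j * x j)"
  unfolding bounded_cop_def using diag_mult_cell2[of d M, OF assms] by (auto simp: algebra_simps)

lemma copnorm_diag_mult:
  assumes d: "\<And>j. cmod (d j) \<le> M" and attained: "cmod (d m) = M"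
  shows "copnorm (\<lambda>x j. d j * x j) = M"
proof (rule antisym)
  show "copnorm (\<lambda>x j. d j * x j) \<le> M"
  proof (rule copnorm_le)
    fix x assume "x \<in> cell2" "cnorm x \<le> 1"
    then show "cnorm (\<lambda>j. d j * x j) \<le> M"
      using diag_mult_cell2(2)[of d M, OF d] attained mult_left_le[of "cnorm x" M] by fastforce
  qed
  have "(\<lambda>j. d j * unit_seq m j) = (\<lambda>j. d m * unit_seq m j)"
    by (auto simp: unit_seq_def)
  then have "cnorm (\<lambda>j. d j * unit_seq m j) = M"
    by (simp add: cnorm_scaled_unit_seq attained)
  then show "M \<le> copnorm (\<lambda>x j. d j * x j)"
    using cnorm_le_copnorm[OF bounded_cop_diag_mult[of d M, OF d] unit_seq_cell2, of m]
    by (simp add: cnorm_unit_seq)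
qed

lemma copnorm_diag_mult_single: "copnorm (\<lambda>x j. (if j = m then c else 0) * x j) = cmod c"
  by (rule copnorm_diag_mult[where m = m]) auto

lemma calg_const: "(\<lambda>t. c) \<in> calg"
  by (auto simp: calg_def)

lemma calg_diff: "f \<in> calg \<Longrightarrow> g \<in> calg \<Longrightarrow> (\<lambda>t. f t - g t) \<in> calg"
  unfolding calg_def by (auto intro!: continuous_intros tendsto_diff)

lemma calg_mult: "f \<in> calg \<Longrightarrow> g \<in> calg \<Longrightarrow> (\<lambda>t. f t * g t) \<in> calg"
  unfolding calg_def by (auto intro!: continuous_intros tendsto_mult)

lemma calg_cnj: "f \<in> calg \<Longrightarrow> (\<lambda>t. cnj (f t)) \<in> calg"
  unfolding calg_def by (auto intro!: continuous_intros tendsto_cnj)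

lemma calg_bounded:
  assumes "f \<in> calg"
  obtains M where "\<And>t. cmod (f t) \<le> M"
proof -
  obtain l1 l2 where cont: "continuous_on UNIV f"
    and top: "(f \<longlongrightarrow> l1) at_top" and bot: "(f \<longlongrightarrow> l2) at_bot"
    using assms by (auto simp: calg_def)
  have "eventually (\<lambda>t. cmod (f t) < cmod l1 + 1) at_top"
    using tendsto_norm[OF top] by (rule order_tendstoD) simp
  then obtain T1 where T1: "\<And>t. T1 \<le> t \<Longrightarrow> cmod (f t) < cmod l1 + 1"
    by (auto simp: eventually_at_top_linorder)
  have "eventually (\<lambda>t. cmod (f t) < cmod l2 + 1) at_bot"
    using tendsto_norm[OF bot] by (rule order_tendstoD) simp
  then obtain T2 where T2: "\<And>t. t \<le> T2 \<Longrightarrow> cmod (f t) < cmod l2 + 1"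
    by (auto simp: eventually_at_bot_linorder)
  have "\<forall>t. min T2 T1 \<le> t \<and> t \<le> T1 \<longrightarrow> isCont (\<lambda>t. cmod (f t)) t"
    using cont by (simp add: continuous_on_eq_continuous_at isCont_norm)
  then obtain B where B: "\<And>t. min T2 T1 \<le> t \<Longrightarrow> t \<le> T1 \<Longrightarrow> cmod (f t) \<le> B"
    using isCont_bounded[of "min T2 T1" T1 "\<lambda>t. cmod (f t)"] by auto
  have "cmod (f t) \<le> max B (max (cmod l1 + 1) (cmod l2 + 1))" for t
  proof -
    consider "T1 \<le> t" | "t \<le> T2" | "min T2 T1 \<le> t" "t \<le> T1" by linarith
    then show ?thesis using T1[of t] T2[of t] B[of t] by cases linarith+
  qed
  then show ?thesis by (rule that)
qed

lemma norm_le_supnorm: "f \<in> calg \<Longrightarrow> cmod (f t) \<le> supnorm f"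
  unfolding supnorm_def
  by (erule calg_bounded) (auto intro!: cSUP_upper bdd_aboveI2)

lemma supnorm_le: "(\<And>t. cmod (f t) \<le> e) \<Longrightarrow> supnorm f \<le> e"
  unfolding supnorm_def by (rule cSUP_least) auto

lemma cmod_i_plus_of_real: "cmod (\<i> + complex_of_real t) = sqrt (1 + t\<^sup>2)"
proof -
  have "\<i> + complex_of_real t = Complex t 1" by (simp add: complex_eq_iff)
  then show ?thesis by (simp add: cmod_def add.commute)
qed

lemma cmod_i_plus_of_real_ge: "1 \<le> cmod (\<i> + complex_of_real t)" "\<bar>t\<bar> \<le> cmod (\<i> + complex_of_real t)"
  unfolding cmod_i_plus_of_real by (rule real_le_rsqrt, simp)+

lemma i_plus_of_real_neq_0: "\<i> + complex_of_real t \<noteq> 0"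
  using cmod_i_plus_of_real_ge(1)[of t] by auto

lemma calg_resolvent: "(\<lambda>t. 1 / (\<i> + complex_of_real t)) \<in> calg"
proof -
  have norm: "(\<lambda>t. cmod (1 / (\<i> + complex_of_real t))) = (\<lambda>t. 1 / sqrt (1 + t\<^sup>2))"
    by (simp only: norm_divide norm_one cmod_i_plus_of_real)
  have "((\<lambda>t. cmod (1 / (\<i> + complex_of_real t))) \<longlongrightarrow> 0) at_top"
    unfolding norm by real_asymp
  moreover have "((\<lambda>t. cmod (1 / (\<i> + complex_of_real t))) \<longlongrightarrow> 0) at_bot"
    unfolding norm by real_asymp
  moreover have "continuous_on UNIV (\<lambda>t. 1 / (\<i> + complex_of_real t))"
    by (intro continuous_intros) (simp add: i_plus_of_real_neq_0)
  ultimately show ?thesis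
    unfolding calg_def tendsto_norm_zero_iff by blast
qed

lemma calg_Psi: "Psi \<in> calg"
proof -
  have "((\<lambda>t. t / sqrt (1 + t\<^sup>2)) \<longlongrightarrow> 1) at_top" by real_asymp
  moreover have "((\<lambda>t. t / sqrt (1 + t\<^sup>2)) \<longlongrightarrow> -1) at_bot" by real_asymp
  ultimately have "(Psi \<longlongrightarrow> 1) at_top" "(Psi \<longlongrightarrow> -1) at_bot"
    unfolding Psi_def[abs_def] by (auto dest: tendsto_of_real[where 'a = complex])
  moreover have "continuous_on UNIV Psi"
    unfolding Psi_def[abs_def]
    by (intro continuous_intros) (simp add: add_nonneg_eq_0_iff)
  ultimately show ?thesis unfolding calg_def by blast
qed

(* (mu - t) * cutoff_quot delta mu t = min 1 ((t - mu)^2 / delta^2) is a continuous cutoff that vanishes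
   to second order at mu, so its quotient by mu - t is still continuous. *)
definition cutoff_quot :: "real \<Rightarrow> real \<Rightarrow> real \<Rightarrow> real" where
  "cutoff_quot \<delta> \<mu> t = (\<mu> - t) / max (\<delta>\<^sup>2) ((t - \<mu>)\<^sup>2)"

lemma cutoff_quot_bounds:
  assumes "0 < \<delta>"
  shows "0 \<le> (\<mu> - t) * cutoff_quot \<delta> \<mu> t" and "(\<mu> - t) * cutoff_quot \<delta> \<mu> t \<le> 1"
proof -
  have "(\<mu> - t) * cutoff_quot \<delta> \<mu> t = (t - \<mu>)\<^sup>2 / max (\<delta>\<^sup>2) ((t - \<mu>)\<^sup>2)"
    by (simp add: cutoff_quot_def power2_eq_square algebra_simps)
  moreover have "0 < max (\<delta>\<^sup>2) ((t - \<mu>)\<^sup>2)" using assms by (simp add: less_max_iff_disj)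
  ultimately show "0 \<le> (\<mu> - t) * cutoff_quot \<delta> \<mu> t" "(\<mu> - t) * cutoff_quot \<delta> \<mu> t \<le> 1"
    by simp_all
qed

lemma cutoff_quot_far:
  assumes "0 < \<delta>" "\<delta> \<le> \<bar>t - \<mu>\<bar>"
  shows "cutoff_quot \<delta> \<mu> t = 1 / (\<mu> - t)"
proof -
  have "\<delta>\<^sup>2 \<le> (t - \<mu>)\<^sup>2" using assms by (metis power2_abs power_mono less_imp_le)
  then have "max (\<delta>\<^sup>2) ((t - \<mu>)\<^sup>2) = (\<mu> - t) * (\<mu> - t)"
    by (simp add: power2_eq_square algebra_simps)
  moreover have "\<mu> - t \<noteq> 0" using assms by auto
  ultimately show ?thesis by (simp add: cutoff_quot_def)
qed

lemma diff_mult_cutoff_quot_far: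
  assumes "0 < \<delta>" "\<delta> \<le> \<bar>t - \<mu>\<bar>"
  shows "(\<mu> - t) * cutoff_quot \<delta> \<mu> t = 1"
  using assms by (auto simp: cutoff_quot_far)

lemma continuous_cutoff_quot:
  assumes "0 < \<delta>"
  shows "continuous_on UNIV (cutoff_quot \<delta> \<mu>)"
proof -
  have "0 < max (\<delta>\<^sup>2) ((t - \<mu>)\<^sup>2)" for t using assms by (simp add: less_max_iff_disj)
  then show ?thesis
    unfolding cutoff_quot_def[abs_def] by (intro continuous_intros) (use less_irrefl in metis)
qed

lemma eventually_far_at_top: "eventually (\<lambda>t::real. \<delta> \<le> \<bar>t - \<mu>\<bar>) at_top"
  using eventually_ge_at_top[of "\<mu> + \<delta>"] by eventually_elim auto

lemma eventually_far_at_bot: "eventually (\<lambda>t::real. \<delta> \<le> \<bar>t - \<mu>\<bar>) at_bot"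
  using eventually_le_at_bot[of "\<mu> - \<delta>"] by eventually_elim auto

lemma calg_cutoff:
  assumes \<delta>: "0 < \<delta>"
  shows "(\<lambda>t. complex_of_real (1 - (\<mu> - t) * cutoff_quot \<delta> \<mu> t)) \<in> calg"
proof -
  have "eventually (\<lambda>t. complex_of_real (1 - (\<mu> - t) * cutoff_quot \<delta> \<mu> t) = 0) F"
    if "eventually (\<lambda>t. \<delta> \<le> \<bar>t - \<mu>\<bar>) F" for F
    using that by eventually_elim (simp add: diff_mult_cutoff_quot_far[OF \<delta>])
  then have "((\<lambda>t. complex_of_real (1 - (\<mu> - t) * cutoff_quot \<delta> \<mu> t)) \<longlongrightarrow> 0) at_top"
    "((\<lambda>t. complex_of_real (1 - (\<mu> - t) * cutoff_quot \<delta> \<mu> t)) \<longlongrightarrow> 0) at_bot"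
    using eventually_far_at_top eventually_far_at_bot by (blast intro: tendsto_eventually)+
  moreover have "continuous_on UNIV (\<lambda>t. complex_of_real (1 - (\<mu> - t) * cutoff_quot \<delta> \<mu> t))"
    using continuous_cutoff_quot[OF \<delta>] by (intro continuous_intros) auto
  ultimately show ?thesis unfolding calg_def by blast
qed

lemma calg_i_plus_cutoff_quot:
  assumes \<delta>: "0 < \<delta>"
  shows "(\<lambda>t. (\<i> + complex_of_real t) * complex_of_real (cutoff_quot \<delta> \<mu> t)) \<in> calg"
proof -
  let ?g = "\<lambda>t. \<i> * complex_of_real (1 / (\<mu> - t)) + complex_of_real (t / (\<mu> - t))"
  have lim: "((\<lambda>t. (\<i> + complex_of_real t) * complex_of_real (cutoff_quot \<delta> \<mu> t)) \<longlongrightarrow> -1) F"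
    if far: "eventually (\<lambda>t. \<delta> \<le> \<bar>t - \<mu>\<bar>) F"
      and "((\<lambda>t. 1 / (\<mu> - t)) \<longlongrightarrow> 0) F" "((\<lambda>t. t / (\<mu> - t)) \<longlongrightarrow> -1) F" for F
  proof (rule Lim_transform_eventually)
    have "(?g \<longlongrightarrow> \<i> * complex_of_real 0 + complex_of_real (-1)) F"
      using that(2,3) by (intro tendsto_intros)
    then show "(?g \<longlongrightarrow> -1) F" by simp
    show "eventually (\<lambda>t. ?g t = (\<i> + complex_of_real t) * complex_of_real (cutoff_quot \<delta> \<mu> t)) F"
      using far
    proof eventually_elim
      case (elim t)
      have "complex_of_real (t / (\<mu> - t)) = complex_of_real t * complex_of_real (1 / (\<mu> - t))"
        by simp
      then show ?case by (simp only: cutoff_quot_far[OF \<delta> elim] distrib_right)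
    qed
  qed
  have "((\<lambda>t. (\<i> + complex_of_real t) * complex_of_real (cutoff_quot \<delta> \<mu> t)) \<longlongrightarrow> -1) at_top"
    by (rule lim[OF eventually_far_at_top]; real_asymp)
  moreover have "((\<lambda>t. (\<i> + complex_of_real t) * complex_of_real (cutoff_quot \<delta> \<mu> t)) \<longlongrightarrow> -1) at_bot"
    by (rule lim[OF eventually_far_at_bot]; real_asymp)
  moreover have "continuous_on UNIV (\<lambda>t. (\<i> + complex_of_real t) * complex_of_real (cutoff_quot \<delta> \<mu> t))"
    using continuous_cutoff_quot[OF \<delta>] by (intro continuous_intros) auto
  ultimately show ?thesis unfolding calg_def by blast
qed

(* Since (i + t) (i + mu) (r t - r mu) = mu - t for r t = 1/(i + t), the cutoff divided by mu - t
   becomes a multiple of r - r mu; the remainder is supported where k is small. *)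
lemma calg_factor_resolvent_diff:
  fixes k :: "real \<Rightarrow> complex"
  assumes k: "k \<in> calg" "k \<mu> = 0" and \<epsilon>: "0 < \<epsilon>"
  obtains h m where "h \<in> calg" "m \<in> calg"
    and "k = (\<lambda>t. h t * (1 / (\<i> + complex_of_real t) - 1 / (\<i> + complex_of_real \<mu>)) + m t)"
    and "\<And>t. cmod (m t) \<le> \<epsilon>"
proof -
  have "isCont k \<mu>" using k(1) by (simp add: calg_def continuous_on_eq_continuous_at)
  then obtain \<delta> where \<delta>: "0 < \<delta>" and near: "\<And>t. \<bar>t - \<mu>\<bar> < \<delta> \<Longrightarrow> cmod (k t) < \<epsilon>"
    using \<epsilon> k(2) unfolding isCont_def LIM_eq by (metis diff_zero real_norm_def norm_zero)
  define \<phi> where "\<phi> t = (\<mu> - t) * cutoff_quot \<delta> \<mu> t" for t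
  define h where "h t = k t * ((\<i> + complex_of_real \<mu>) * ((\<i> + complex_of_real t) * complex_of_real (cutoff_quot \<delta> \<mu> t)))" for t
  define m where "m t = k t * complex_of_real (1 - \<phi> t)" for t
  show thesis
  proof
    show "h \<in> calg"
      unfolding h_def[abs_def] by (intro calg_mult k(1) calg_const calg_i_plus_cutoff_quot \<delta>)
    show "m \<in> calg"
      unfolding m_def[abs_def] \<phi>_def by (intro calg_mult k(1) calg_cutoff \<delta>)
    show "k = (\<lambda>t. h t * (1 / (\<i> + complex_of_real t) - 1 / (\<i> + complex_of_real \<mu>)) + m t)"
    proof
      fix t
      let ?r = "1 / (\<i> + complex_of_real t) - 1 / (\<i> + complex_of_real \<mu>)"
      have "(\<i> + complex_of_real t) * (\<i> + complex_of_real \<mu>) * ?r = complex_of_real (\<mu> - t)"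
        using i_plus_of_real_neq_0[of t] i_plus_of_real_neq_0[of \<mu>]
        by (simp add: right_diff_distrib)
      then have "h t * ?r = k t * complex_of_real (\<phi> t)"
        unfolding h_def \<phi>_def by (simp add: mult_ac)
      then show "k t = h t * ?r + m t"
        by (simp add: m_def algebra_simps)
    qed
    show "cmod (m t) \<le> \<epsilon>" for t
    proof (cases "\<bar>t - \<mu>\<bar> < \<delta>")
      case True
      have "cmod (m t) = cmod (k t) * \<bar>1 - \<phi> t\<bar>" by (simp only: m_def norm_mult norm_of_real)
      also have "\<dots> \<le> cmod (k t)"
        using cutoff_quot_bounds[OF \<delta>, of \<mu> t] by (simp add: \<phi>_def mult_left_le)
      finally show ?thesis using near[OF True] by simp
    next
      case False
      then show ?thesis using \<epsilon> diff_mult_cutoff_quot_far[OF \<delta>, of t \<mu>] by (simp add: m_def \<phi>_def)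
    qed
  qed
qed

section \<open>Uniqueness of the functional calculus on eigenvectors\<close>

lemma bounded_cop_zero:
  assumes "bounded_cop B"
  shows "B (\<lambda>j. 0) = (\<lambda>j. 0)"
proof -
  have zero: "(\<lambda>j. 0) \<in> cell2" by (simp add: cell2_def)
  have "\<And>x y a b. x \<in> cell2 \<Longrightarrow> y \<in> cell2 \<Longrightarrow> B (\<lambda>j. a * x j + b * y j) = (\<lambda>j. a * B x j + b * B y j)"
    using assms unfolding bounded_cop_def by blast
  from this[OF zero zero, of 0 0] show ?thesis by simp
qed

lemma is_fc_bounded: "is_fc A \<Phi> \<Longrightarrow> f \<in> calg \<Longrightarrow> bounded_cop (\<Phi> f)"
  unfolding is_fc_def by blast

lemma is_fc_copnorm_le: "is_fc A \<Phi> \<Longrightarrow> f \<in> calg \<Longrightarrow> copnorm (\<Phi> f) \<le> supnorm f"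
  unfolding is_fc_def by blast

lemma is_fc_add: "is_fc A \<Phi> \<Longrightarrow> f \<in> calg \<Longrightarrow> g \<in> calg \<Longrightarrow> x \<in> cell2 \<Longrightarrow>
    \<Phi> (\<lambda>t. f t + g t) x = (\<lambda>j. \<Phi> f x j + \<Phi> g x j)"
  unfolding is_fc_def by blast

lemma is_fc_scale: "is_fc A \<Phi> \<Longrightarrow> f \<in> calg \<Longrightarrow> x \<in> cell2 \<Longrightarrow>
    \<Phi> (\<lambda>t. c * f t) x = (\<lambda>j. c * \<Phi> f x j)"
  unfolding is_fc_def by blast

lemma is_fc_mult: "is_fc A \<Phi> \<Longrightarrow> f \<in> calg \<Longrightarrow> g \<in> calg \<Longrightarrow> x \<in> cell2 \<Longrightarrow>
    \<Phi> (\<lambda>t. f t * g t) x = \<Phi> f (\<Phi> g x)"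
  unfolding is_fc_def by blast

lemma is_fc_adjoint: "is_fc A \<Phi> \<Longrightarrow> f \<in> calg \<Longrightarrow> x \<in> cell2 \<Longrightarrow> y \<in> cell2 \<Longrightarrow>
    cinner (\<Phi> f x) y = cinner x (\<Phi> (\<lambda>t. cnj (f t)) y)"
  unfolding is_fc_def by blast

lemma is_fc_one: "is_fc A \<Phi> \<Longrightarrow> x \<in> cell2 \<Longrightarrow> \<Phi> (\<lambda>t. 1) x = x"
  unfolding is_fc_def by blast

lemma is_fc_resolvent: "is_fc A \<Phi> \<Longrightarrow> x \<in> cell2 \<Longrightarrow>
    \<Phi> (\<lambda>t. 1 / (\<i> + complex_of_real t)) x = resolv \<i> 1 A x"
  unfolding is_fc_def by blast

lemma is_fc_const: "is_fc A \<Phi> \<Longrightarrow> x \<in> cell2 \<Longrightarrow> \<Phi> (\<lambda>t. c) x = (\<lambda>j. c * x j)"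
  using is_fc_scale[OF _ calg_const, of A \<Phi> x c 1] by (simp add: is_fc_one)

lemma is_fc_diff:
  assumes \<Phi>: "is_fc A \<Phi>" and "f \<in> calg" "g \<in> calg" "x \<in> cell2"
  shows "\<Phi> (\<lambda>t. f t - g t) x = (\<lambda>j. \<Phi> f x j - \<Phi> g x j)"
proof -
  have "\<Phi> (\<lambda>t. f t + (-1) * g t) x = (\<lambda>j. \<Phi> f x j + \<Phi> (\<lambda>t. (-1) * g t) x j)"
    using assms by (intro is_fc_add calg_mult calg_const)
  then show ?thesis using is_fc_scale[OF \<Phi> \<open>g \<in> calg\<close> \<open>x \<in> cell2\<close>, of "-1"] by simp
qed

lemma is_fc_eigenvector:
  assumes \<Phi>: "is_fc A \<Phi>" and f: "f \<in> calg" and e: "e \<in> cell2" "cnorm e \<le> 1"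
    and eigen: "\<Phi> (\<lambda>t. 1 / (\<i> + complex_of_real t)) e = (\<lambda>j. 1 / (\<i> + complex_of_real \<mu>) * e j)"
  shows "\<Phi> f e = (\<lambda>j. f \<mu> * e j)"
proof -
  define k where "k t = f t - f \<mu>" for t
  have k: "k \<in> calg" "k \<mu> = 0"
    unfolding k_def[abs_def] by (auto intro: calg_diff f calg_const)
  have r: "(\<lambda>t. 1 / (\<i> + complex_of_real t) - 1 / (\<i> + complex_of_real \<mu>)) \<in> calg"
    by (intro calg_diff calg_resolvent calg_const)
  have annihilated: "\<Phi> (\<lambda>t. 1 / (\<i> + complex_of_real t) - 1 / (\<i> + complex_of_real \<mu>)) e = (\<lambda>j. 0)"
    using is_fc_diff[OF \<Phi> calg_resolvent calg_const e(1)] by (simp add: eigen is_fc_const[OF \<Phi> e(1)])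
  have Phi_k: "\<Phi> k e \<in> cell2"
    using is_fc_bounded[OF \<Phi> k(1)] e(1) by (simp add: bounded_cop_def)
  have "cnorm (\<Phi> k e) \<le> 0 + \<epsilon>" if \<epsilon>: "0 < \<epsilon>" for \<epsilon>
  proof -
    obtain h m where h: "h \<in> calg" and m: "m \<in> calg" and bound: "\<And>t. cmod (m t) \<le> \<epsilon>"
      and k_eq: "k = (\<lambda>t. h t * (1 / (\<i> + complex_of_real t) - 1 / (\<i> + complex_of_real \<mu>)) + m t)"
      using calg_factor_resolvent_diff[OF k \<epsilon>] by blast
    have "\<Phi> k e = (\<lambda>j. \<Phi> h (\<Phi> (\<lambda>t. 1 / (\<i> + complex_of_real t) - 1 / (\<i> + complex_of_real \<mu>)) e) j + \<Phi> m e j)"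
      unfolding k_eq by (simp add: is_fc_add[OF \<Phi> calg_mult[OF h r] m e(1)] is_fc_mult[OF \<Phi> h r e(1)])
    then have "cnorm (\<Phi> k e) = cnorm (\<Phi> m e)"
      by (simp add: annihilated bounded_cop_zero[OF is_fc_bounded[OF \<Phi> h]])
    also have "cnorm (\<Phi> m e) \<le> copnorm (\<Phi> m)"
      by (rule cnorm_le_copnorm[OF is_fc_bounded[OF \<Phi> m] e])
    also have "\<dots> \<le> supnorm m" by (rule is_fc_copnorm_le[OF \<Phi> m])
    also have "\<dots> \<le> \<epsilon>" by (rule supnorm_le[OF bound])
    finally show ?thesis by simp
  qed
  then have "cnorm (\<Phi> k e) \<le> 0" by (rule field_le_epsilon)
  then have "\<Phi> k e = (\<lambda>j. 0)"
    using cnorm_eq_0[OF Phi_k] cnorm_nonneg[OF Phi_k] by simp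
  moreover have "\<Phi> k e = (\<lambda>j. \<Phi> f e j - f \<mu> * e j)"
    unfolding k_def[abs_def] by (simp add: is_fc_diff[OF \<Phi> f calg_const e(1)] is_fc_const[OF \<Phi> e(1)])
  ultimately show ?thesis by (simp add: fun_eq_iff)
qed

section \<open>Diagonal selfadjoint operators\<close>

definition diag_op :: "(nat \<Rightarrow> real) \<Rightarrow> rop" where
  "diag_op a = ({x \<in> rell2. summable (\<lambda>j. (a j * x j)\<^sup>2)}, \<lambda>x j. a j * x j)"

lemma summable_square_lincomb:
  fixes u v :: "nat \<Rightarrow> real"
  assumes "summable (\<lambda>j. (u j)\<^sup>2)" "summable (\<lambda>j. (v j)\<^sup>2)"
  shows "summable (\<lambda>j. (p * u j + q * v j)\<^sup>2)"
proof (rule summable_comparison_test')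
  show "summable (\<lambda>j. 2 * p\<^sup>2 * (u j)\<^sup>2 + 2 * q\<^sup>2 * (v j)\<^sup>2)"
    using assms by (intro summable_add summable_mult)
  have "0 \<le> (p * u j - q * v j)\<^sup>2" for j by simp
  then show "norm ((p * u j + q * v j)\<^sup>2) \<le> 2 * p\<^sup>2 * (u j)\<^sup>2 + 2 * q\<^sup>2 * (v j)\<^sup>2" for j
    unfolding real_norm_def abs_power2 by (simp add: power2_eq_square algebra_simps)
qed

lemma rell2_truncation:
  assumes x: "x \<in> rell2" and \<epsilon>: "0 < \<epsilon>"
  obtains N where "rnorm (\<lambda>j. x j - (if j < N then x j else 0)) < \<epsilon>"
proof -
  have sx: "summable (\<lambda>j. (x j)\<^sup>2)" using x by (simp add: rell2_def)
  obtain N where N: "norm (\<Sum>i. (x (i + N))\<^sup>2) < \<epsilon>\<^sup>2"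
    using suminf_exist_split[OF _ sx, of "\<epsilon>\<^sup>2"] \<epsilon> by auto
  define g where "g j = (x j - (if j < N then x j else 0))\<^sup>2" for j
  have "summable g" by (rule summable_comparison_test'[OF sx]) (simp add: g_def)
  then have "suminf g = (\<Sum>i. g (i + N)) + (\<Sum>i<N. g i)" by (rule suminf_split_initial_segment)
  also have "\<dots> = (\<Sum>i. (x (i + N))\<^sup>2)" by (simp add: g_def)
  finally have "sqrt (suminf g) < sqrt (\<epsilon>\<^sup>2)" using N by (simp del: real_sqrt_abs)
  then show ?thesis using \<epsilon> that by (simp add: rnorm_def g_def[abs_def])
qed

lemma rinner_unit_seq: "rinner (unit_seq k) x = x k"
proof -
  have "(\<lambda>j. unit_seq k j * x j) = (\<lambda>j. if j = k then x k else 0)"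
    by (auto simp: unit_seq_def)
  then show ?thesis by (simp add: rinner_def suminf_single_eq)
qed

lemma finite_support_in_diag_op_dom:
  assumes "finite {j. x j \<noteq> 0}"
  shows "x \<in> fst (diag_op a)"
  using assms by (auto simp: diag_op_def rell2_def intro!: summable_finite[of "{j. x j \<noteq> 0}"])

lemma diag_op_adjoint_dom:
  assumes y: "y \<in> rell2" and z: "z \<in> rell2"
    and adj: "\<And>x. x \<in> fst (diag_op a) \<Longrightarrow> rinner (snd (diag_op a) x) y = rinner x z"
  shows "y \<in> fst (diag_op a)"
proof -
  have "z k = a k * y k" for k
  proof -
    have "unit_seq k \<in> fst (diag_op a)"
      by (rule finite_support_in_diag_op_dom) (simp add: unit_seq_def)
    from adj[OF this] have "rinner (\<lambda>j. a j * unit_seq k j) y = z k"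
      by (simp add: diag_op_def rinner_unit_seq)
    moreover have "(\<lambda>j. a j * unit_seq k j * y j) = (\<lambda>j. if j = k then a k * y k else 0)"
      by (auto simp: unit_seq_def)
    ultimately show ?thesis by (simp add: rinner_def suminf_single_eq)
  qed
  then show ?thesis using y z by (simp add: diag_op_def rell2_def)
qed

lemma diag_op_SA: "diag_op a \<in> SA"
proof -
  define D where "D = fst (diag_op a)"
  have D: "D = {x \<in> rell2. summable (\<lambda>j. (a j * x j)\<^sup>2)}" by (simp add: D_def diag_op_def)
  have T: "snd (diag_op a) = (\<lambda>x j. a j * x j)" by (simp add: diag_op_def)
  have lin: "(\<lambda>j. p * x j + q * y j) \<in> D" if "x \<in> D" "y \<in> D" for x y p q
  proof -
    have "summable (\<lambda>j. (p * (a j * x j) + q * (a j * y j))\<^sup>2)"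
      using that by (intro summable_square_lincomb) (auto simp: D)
    moreover have "summable (\<lambda>j. (p * x j + q * y j)\<^sup>2)"
      using that by (intro summable_square_lincomb) (auto simp: D rell2_def)
    moreover have "(a j * (p * x j + q * y j))\<^sup>2 = (p * (a j * x j) + q * (a j * y j))\<^sup>2" for j
      by (simp add: algebra_simps)
    ultimately show ?thesis by (simp add: D rell2_def)
  qed
  have dense: "\<exists>y\<in>D. rnorm (\<lambda>j. x j - y j) < \<epsilon>" if x: "x \<in> rell2" and \<epsilon>: "0 < \<epsilon>" for x \<epsilon>
  proof -
    obtain N where "rnorm (\<lambda>j. x j - (if j < N then x j else 0)) < \<epsilon>"
      using rell2_truncation[OF x \<epsilon>] .
    moreover have "(\<lambda>j. if j < N then x j else 0) \<in> D"
      unfolding D_def by (rule finite_support_in_diag_op_dom) (auto intro: finite_subset[of _ "{..<N}"])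
    ultimately show ?thesis by (intro bexI[where x = "\<lambda>j. if j < N then x j else 0"])
  qed
  have symmetric: "rinner (\<lambda>j. a j * x j) y = rinner x (\<lambda>j. a j * y j)" for x y
    unfolding rinner_def by (simp add: mult_ac)
  have adjoint_dom: "{y \<in> rell2. \<exists>z\<in>rell2. \<forall>x\<in>D. rinner (\<lambda>j. a j * x j) y = rinner x z} = D"
  proof (intro equalityI subsetI)
    fix y assume "y \<in> {y \<in> rell2. \<exists>z\<in>rell2. \<forall>x\<in>D. rinner (\<lambda>j. a j * x j) y = rinner x z}"
    then show "y \<in> D" using diag_op_adjoint_dom[of y _ a] by (auto simp: D_def T)
  next
    fix y assume "y \<in> D"
    then show "y \<in> {y \<in> rell2. \<exists>z\<in>rell2. \<forall>x\<in>D. rinner (\<lambda>j. a j * x j) y = rinner x z}"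
      using symmetric by (auto simp: D rell2_def)
  qed
  have "D \<subseteq> rell2" "\<forall>x\<in>D. (\<lambda>j. a j * x j) \<in> rell2" by (auto simp: D rell2_def)
  moreover have "\<forall>x\<in>D. \<forall>y\<in>D. \<forall>p q::real. (\<lambda>j. p * x j + q * y j) \<in> D \<and>
      (\<lambda>j. a j * (p * x j + q * y j)) = (\<lambda>j. p * (a j * x j) + q * (a j * y j))"
    using lin by (simp add: algebra_simps)
  ultimately show ?thesis
    unfolding SA_def selfadjoint_def Let_def mem_Collect_eq D_def[symmetric] T
    using dense symmetric adjoint_dom by blast
qed

lemma cact_diag_op: "cact (diag_op a) z = (\<lambda>j. complex_of_real (a j) * z j)"
  by (auto simp: cact_def diag_op_def complex_eq_iff)

lemma cdom_diag_opI:
  assumes y: "y \<in> cell2" and c: "0 < c"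
    and bound: "\<And>j. c * cmod (x j) \<le> cmod (y j)" "\<And>j. c * \<bar>a j\<bar> * cmod (x j) \<le> cmod (y j)"
  shows "x \<in> cdom (diag_op a)"
proof -
  have sy: "summable (\<lambda>j. (cmod (y j) / c)\<^sup>2)"
    using y by (simp add: cell2_def power_divide summable_divide)
  have square_le: "u\<^sup>2 \<le> (cmod (y j) / c)\<^sup>2" if "c * \<bar>u\<bar> \<le> cmod (y j)" for u j
    using that c by (simp add: abs_le_square_iff[symmetric] pos_le_divide_eq mult.commute)
  have "(\<lambda>j. p (x j)) \<in> fst (diag_op a)" if p: "\<And>z. \<bar>p z\<bar> \<le> cmod z" for p
  proof -
    have "c * \<bar>p (x j)\<bar> \<le> cmod (y j)" for j
      using bound(1)[of j] p[of "x j"] c by (meson mult_left_mono less_imp_le order_trans)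
    moreover have "c * \<bar>a j * p (x j)\<bar> \<le> cmod (y j)" for j
      using bound(2)[of j] p[of "x j"] c
      by (simp add: abs_mult mult.assoc) (meson mult_left_mono mult_nonneg_nonneg abs_ge_zero less_imp_le order_trans)
    ultimately show ?thesis
      unfolding diag_op_def rell2_def
      by (auto intro!: summable_comparison_test'[OF sy] square_le)
  qed
  then show ?thesis
    unfolding cdom_def using abs_Re_le_cmod abs_Im_le_cmod by blast
qed

lemma resolv_diag_op:
  assumes s: "s \<noteq> 0" and y: "y \<in> cell2"
  shows "resolv \<i> (complex_of_real s) (diag_op a) y = (\<lambda>j. y j / (\<i> + complex_of_real (s * a j)))"
proof -
  let ?x = "\<lambda>j. y j / (\<i> + complex_of_real (s * a j))"
  have eq: "(\<lambda>j. \<i> * x j + complex_of_real s * cact (diag_op a) x j)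
      = (\<lambda>j. (\<i> + complex_of_real (s * a j)) * x j)" for x
    by (simp add: cact_diag_op algebra_simps)
  have y_eq: "cmod (y j) = cmod (\<i> + complex_of_real (s * a j)) * cmod (?x j)" for j
    using i_plus_of_real_neq_0[of "s * a j"] by (simp add: norm_divide del: of_real_mult)
  have "?x \<in> cdom (diag_op a)"
  proof (rule cdom_diag_opI[OF y, of "min 1 \<bar>s\<bar>"])
    show "0 < min 1 \<bar>s\<bar>" using s by simp
    show "min 1 \<bar>s\<bar> * cmod (?x j) \<le> cmod (y j)" for j
      unfolding y_eq using cmod_i_plus_of_real_ge(1)[of "s * a j"]
      by (intro mult_right_mono) auto
    show "min 1 \<bar>s\<bar> * \<bar>a j\<bar> * cmod (?x j) \<le> cmod (y j)" for j
    proof -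
      have "min 1 \<bar>s\<bar> * \<bar>a j\<bar> \<le> \<bar>s\<bar> * \<bar>a j\<bar>" by (intro mult_right_mono) auto
      also have "\<dots> \<le> cmod (\<i> + complex_of_real (s * a j))"
        using cmod_i_plus_of_real_ge(2)[of "s * a j"] by (simp only: abs_mult)
      finally show ?thesis unfolding y_eq by (intro mult_right_mono) auto
    qed
  qed
  moreover have "x = ?x" if "(\<lambda>j. (\<i> + complex_of_real (s * a j)) * x j) = y" for x
  proof
    fix j
    have "y j = (\<i> + complex_of_real (s * a j)) * x j" using that by auto
    then show "x j = ?x j"
      using i_plus_of_real_neq_0[of "s * a j"] by (simp del: of_real_mult)
  qed
  moreover have "(\<lambda>j. (\<i> + complex_of_real (s * a j)) * ?x j) = y"
    using i_plus_of_real_neq_0 by (simp del: of_real_mult)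
  ultimately show ?thesis
    unfolding resolv_def eq by (intro the_equality) auto
qed

definition diag_fc :: "(nat \<Rightarrow> real) \<Rightarrow> (real \<Rightarrow> complex) \<Rightarrow> cseq \<Rightarrow> cseq" where
  "diag_fc a f x = (\<lambda>j. f (a j) * x j)"

lemma is_fc_diag_fc: "is_fc (diag_op a) (diag_fc a)"
proof -
  have "bounded_cop (diag_fc a f) \<and> copnorm (diag_fc a f) \<le> supnorm f" if f: "f \<in> calg" for f
  proof
    have "cmod (f (a j)) \<le> supnorm f" for j by (rule norm_le_supnorm[OF f])
    then show "bounded_cop (diag_fc a f)"
      unfolding diag_fc_def[abs_def] by (rule bounded_cop_diag_mult)
    show "copnorm (diag_fc a f) \<le> supnorm f"
    proof (rule copnorm_le)
      fix x assume "x \<in> cell2" "cnorm x \<le> 1"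
      then show "cnorm (diag_fc a f x) \<le> supnorm f"
        using diag_mult_cell2(2)[of "\<lambda>j. f (a j)" "supnorm f" x] norm_le_supnorm[OF f]
          norm_le_supnorm[OF f, of 0] mult_left_le[of "cnorm x" "supnorm f"]
        unfolding diag_fc_def by (meson norm_ge_zero order_trans)
    qed
  qed
  moreover have "diag_fc a (\<lambda>t. 1 / (\<i> + complex_of_real t)) x = resolv \<i> 1 (diag_op a) x"
    if "x \<in> cell2" for x
    using resolv_diag_op[of 1 x a] that by (simp add: diag_fc_def)
  ultimately show ?thesis
    unfolding is_fc_def cinner_def diag_fc_def by (simp add: algebra_simps)
qed

lemma is_fc_diag_op_unique:
  assumes \<Phi>: "is_fc (diag_op a) \<Phi>" and f: "f \<in> calg" and x: "x \<in> cell2"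
  shows "\<Phi> f x = diag_fc a f x"
proof
  fix k
  have "\<Phi> (\<lambda>t. 1 / (\<i> + complex_of_real t)) (unit_seq k) = resolv \<i> 1 (diag_op a) (unit_seq k)"
    by (rule is_fc_resolvent[OF \<Phi> unit_seq_cell2])
  also have "\<dots> = (\<lambda>j. unit_seq k j / (\<i> + complex_of_real (a j)))"
    using resolv_diag_op[of 1 "unit_seq k" a] unit_seq_cell2 by simp
  also have "\<dots> = (\<lambda>j. 1 / (\<i> + complex_of_real (a k)) * unit_seq k j)"
    by (auto simp: unit_seq_def)
  finally have "\<Phi> (\<lambda>t. cnj (f t)) (unit_seq k) = (\<lambda>j. cnj (f (a k)) * unit_seq k j)"
    by (intro is_fc_eigenvector[OF \<Phi> calg_cnj[OF f] unit_seq_cell2]) (simp add: cnorm_unit_seq)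
  moreover have "cinner (\<Phi> f x) (unit_seq k) = cinner x (\<Phi> (\<lambda>t. cnj (f t)) (unit_seq k))"
    by (rule is_fc_adjoint[OF \<Phi> f x unit_seq_cell2])
  ultimately show "\<Phi> f x k = diag_fc a f x k"
    by (simp add: cinner_unit_seq cinner_scaled_unit_seq diag_fc_def)
qed

lemma fc_diag_op:
  assumes "f \<in> calg" "x \<in> cell2"
  shows "fc f (diag_op a) x = (\<lambda>j. f (a j) * x j)"
  unfolding fc_def
proof (rule the_equality)
  show "\<exists>\<Phi>. is_fc (diag_op a) \<Phi> \<and> \<Phi> f x = (\<lambda>j. f (a j) * x j)"
    using is_fc_diag_fc by (intro exI[of _ "diag_fc a"]) (simp add: diag_fc_def)
  show "y = (\<lambda>j. f (a j) * x j)" if "\<exists>\<Phi>. is_fc (diag_op a) \<Phi> \<and> \<Phi> f x = y" for y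
    using that is_fc_diag_op_unique[OF _ assms] by (auto simp: diag_fc_def)
qed

lemma inverse_i_plus_of_real: "1 / (\<i> + complex_of_real a) = Complex (a / (1 + a\<^sup>2)) (- 1 / (1 + a\<^sup>2))"
  by (simp add: complex_eq_iff Re_divide Im_divide power2_eq_square)

lemma cmod_resolvent_fn_reflect_diff:
  "cmod (1 / (\<i> + complex_of_real (- t)) - 1 / (\<i> + complex_of_real t)) = 2 * \<bar>t\<bar> / (1 + t\<^sup>2)"
proof -
  have diff: "1 / (\<i> + complex_of_real (- t)) - 1 / (\<i> + complex_of_real t) = complex_of_real (- (2 * t / (1 + t\<^sup>2)))"
    by (simp only: inverse_i_plus_of_real) (simp add: complex_eq_iff)
  show ?thesis unfolding diff norm_of_real by (simp add: abs_mult add_pos_nonneg)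
qed

lemma Aop_eq_diag_op: "Aop n = diag_op (ev n)"
proof -
  have "(ev n j * x)\<^sup>2 = (real (Suc j) * x)\<^sup>2" for j x by (simp add: ev_def power_mult_distrib)
  then show ?thesis by (simp add: Aop_def diag_op_def)
qed

lemma Aop_SA: "Aop n \<in> SA"
  by (simp add: Aop_eq_diag_op diag_op_SA)

lemma copnorm_diag_diff_single:
  assumes "\<And>j. j \<noteq> m \<Longrightarrow> a j = b j"
  shows "copnorm (\<lambda>x j. g (a j) * x j - g (b j) * x j) = cmod (g (a m) - g (b m))"
proof -
  have "(\<lambda>x j. g (a j) * x j - g (b j) * x j) = (\<lambda>x j. (if j = m then g (a m) - g (b m) else 0) * x j)"
    using assms by (auto simp: fun_eq_iff left_diff_distrib)
  then show ?thesis by (simp add: copnorm_diag_mult_single)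
qed

lemma copnorm_diag_Aop_diff:
  assumes "1 \<le> n"
  shows "copnorm (\<lambda>x j. g (ev n j) * x j - g (ev 0 j) * x j) = cmod (g (- real n) - g (real n))"
  using copnorm_diag_diff_single[of "n - 1" "ev n" "ev 0" g] assms by (auto simp: ev_def)

lemma copnorm_fc_Aop_diff:
  assumes "f \<in> calg" "1 \<le> n"
  shows "copnorm (\<lambda>x j. fc f (Aop n) x j - fc f (Aop 0) x j) = cmod (f (- real n) - f (real n))"
proof -
  have "copnorm (\<lambda>x j. fc f (Aop n) x j - fc f (Aop 0) x j)
      = copnorm (\<lambda>x j. f (ev n j) * x j - f (ev 0 j) * x j)"
    using assms(1) by (intro copnorm_cong) (simp add: Aop_eq_diag_op fc_diag_op)
  then show ?thesis using copnorm_diag_Aop_diff[OF assms(2)] by simp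
qed

lemma gap_dist_Aop:
  assumes "1 \<le> n"
  shows "gap_dist (Aop n) (Aop 0) = 4 * real n / (1 + (real n)\<^sup>2)"
proof -
  have "copnorm (\<lambda>x j. resolv \<i> (complex_of_real s) (Aop n) x j - resolv \<i> (complex_of_real s) (Aop 0) x j)
      = 2 * real n / (1 + (real n)\<^sup>2)" if "s = 1 \<or> s = -1" for s
  proof -
    have s: "s \<noteq> 0" using that by auto
    have "copnorm (\<lambda>x j. resolv \<i> (complex_of_real s) (Aop n) x j - resolv \<i> (complex_of_real s) (Aop 0) x j)
      = copnorm (\<lambda>x j. 1 / (\<i> + complex_of_real (s * ev n j)) * x j - 1 / (\<i> + complex_of_real (s * ev 0 j)) * x j)"
      by (intro copnorm_cong) (simp add: Aop_eq_diag_op resolv_diag_op[OF s] del: of_real_mult)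
    also have "\<dots> = cmod (1 / (\<i> + complex_of_real (s * - real n)) - 1 / (\<i> + complex_of_real (s * real n)))"
      using copnorm_diag_Aop_diff[OF assms, of "\<lambda>t. 1 / (\<i> + complex_of_real (s * t))"] by simp
    also have "\<dots> = 2 * real n / (1 + (real n)\<^sup>2)"
      using that cmod_resolvent_fn_reflect_diff[of "real n"] by (auto simp: norm_minus_commute)
    finally show ?thesis .
  qed
  from this[of 1] this[of "-1"] show ?thesis by (simp add: gap_dist_def)
qed

lemma riesz_dist_Aop:
  assumes "1 \<le> n"
  shows "riesz_dist (Aop n) (Aop 0) = 2 * real n / sqrt (1 + (real n)\<^sup>2)"
proof -
  have Psi_diff: "Psi (- real n) - Psi (real n) = complex_of_real (- (2 * real n / sqrt (1 + (real n)\<^sup>2)))"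
    by (simp add: Psi_def)
  show ?thesis
    unfolding riesz_dist_def copnorm_fc_Aop_diff[OF calg_Psi assms] Psi_diff norm_of_real by simp
qed

lemma gap_dist_Aop_LIMSEQ: "(\<lambda>n. gap_dist (Aop n) (Aop 0)) \<longlonglongrightarrow> 0"
proof (rule Lim_transform_eventually)
  show "(\<lambda>n. 4 * real n / (1 + (real n)\<^sup>2)) \<longlonglongrightarrow> 0" by real_asymp
  show "eventually (\<lambda>n. 4 * real n / (1 + (real n)\<^sup>2) = gap_dist (Aop n) (Aop 0)) sequentially"
    using eventually_ge_at_top[of 1] by eventually_elim (simp add: gap_dist_Aop)
qed

lemma riesz_dist_Aop_LIMSEQ: "(\<lambda>n. riesz_dist (Aop n) (Aop 0)) \<longlonglongrightarrow> 2"
proof (rule Lim_transform_eventually)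
  show "(\<lambda>n. 2 * real n / sqrt (1 + (real n)\<^sup>2)) \<longlonglongrightarrow> 2" by real_asymp
  show "eventually (\<lambda>n. 2 * real n / sqrt (1 + (real n)\<^sup>2) = riesz_dist (Aop n) (Aop 0)) sequentially"
    using eventually_ge_at_top[of 1] by eventually_elim (simp add: riesz_dist_Aop)
qed

lemma copnorm_fc_step_Aop_diff_eq_1:
  assumes "\<alpha> \<in> calg" and one: "\<And>t. L1 \<le> t \<Longrightarrow> \<alpha> t = 1" and zero: "\<And>t. t \<le> L2 \<Longrightarrow> \<alpha> t = 0"
  shows "\<exists>N. \<forall>n\<ge>N. copnorm (\<lambda>x j. fc \<alpha> (Aop n) x j - fc \<alpha> (Aop 0) x j) = 1"
proof -
  obtain N :: nat where N: "max (max L1 (- L2)) 1 \<le> real N" using real_arch_simple by blast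
  have "copnorm (\<lambda>x j. fc \<alpha> (Aop n) x j - fc \<alpha> (Aop 0) x j) = 1" if "N \<le> n" for n
  proof -
    have "L1 \<le> real n" "- real n \<le> L2" "1 \<le> n" using N that by auto
    then show ?thesis using copnorm_fc_Aop_diff[OF assms(1)] one zero by simp
  qed
  then show ?thesis by blast
qed

lemma gap_to_riesz_discontinuous:
  assumes "\<And>n. C n \<in> SA" "B \<in> SA" and gap: "(\<lambda>n. gap_dist (C n) B) \<longlonglongrightarrow> 0"
    and riesz: "(\<lambda>n. riesz_dist (C n) B) \<longlonglongrightarrow> r" and "0 < r"
  shows "\<not> (\<forall>B\<in>SA. \<forall>\<epsilon>>0. \<exists>\<delta>>0. \<forall>C\<in>SA. gap_dist C B < \<delta> \<longrightarrow> riesz_dist C B < \<epsilon>)"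
proof
  assume "\<forall>B\<in>SA. \<forall>\<epsilon>>0. \<exists>\<delta>>0. \<forall>C\<in>SA. gap_dist C B < \<delta> \<longrightarrow> riesz_dist C B < \<epsilon>"
  from this[rule_format, OF assms(2), of "r / 2"] \<open>0 < r\<close>
  obtain \<delta> where "0 < \<delta>" and cont: "\<And>C. C \<in> SA \<Longrightarrow> gap_dist C B < \<delta> \<Longrightarrow> riesz_dist C B < r / 2"
    by auto
  have "eventually (\<lambda>n. gap_dist (C n) B < \<delta>) sequentially"
    using order_tendstoD(2)[OF gap \<open>0 < \<delta>\<close>] .
  moreover have "eventually (\<lambda>n. r / 2 < riesz_dist (C n) B) sequentially"
    by (rule order_tendstoD(1)[OF riesz]) (use \<open>0 < r\<close> in simp)
  ultimately have "eventually (\<lambda>n. gap_dist (C n) B < \<delta> \<and> r / 2 < riesz_dist (C n) B) sequentially"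
    by (rule eventually_conj)
  then obtain n where "gap_dist (C n) B < \<delta>" "r / 2 < riesz_dist (C n) B"
    using eventually_happens'[OF sequentially_bot] by blast
  then show False using cont[OF assms(1)] by fastforce
qed

theorem mainTheorem4:
  shows "(\<forall>n. Aop n \<in> SA)
    \<and> (\<lambda>n. gap_dist (Aop n) (Aop 0)) \<longlonglongrightarrow> 0
    \<and> \<not> ((\<lambda>n. riesz_dist (Aop n) (Aop 0)) \<longlonglongrightarrow> 0)
    \<and> (\<forall>\<alpha>\<in>calg. (\<exists>L. \<forall>t\<ge>L. \<alpha> t = 1) \<and> (\<exists>L. \<forall>t\<le>L. \<alpha> t = 0) \<longrightarrow>
          (\<exists>N. \<forall>n\<ge>N. copnorm (\<lambda>x j. fc \<alpha> (Aop n) x j - fc \<alpha> (Aop 0) x j) = 1))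
    \<and> \<not> (\<forall>B\<in>SA. \<forall>\<epsilon>>0. \<exists>\<delta>>0. \<forall>C\<in>SA. gap_dist C B < \<delta> \<longrightarrow> riesz_dist C B < \<epsilon>)"
proof (intro conjI)
  show "\<forall>n. Aop n \<in> SA" by (simp add: Aop_SA)
  show gap: "(\<lambda>n. gap_dist (Aop n) (Aop 0)) \<longlonglongrightarrow> 0" by (rule gap_dist_Aop_LIMSEQ)
  show "\<not> (\<lambda>n. riesz_dist (Aop n) (Aop 0)) \<longlonglongrightarrow> 0"
    using LIMSEQ_unique[OF riesz_dist_Aop_LIMSEQ] by fastforce
  show "\<forall>\<alpha>\<in>calg. (\<exists>L. \<forall>t\<ge>L. \<alpha> t = 1) \<and> (\<exists>L. \<forall>t\<le>L. \<alpha> t = 0) \<longrightarrow>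
      (\<exists>N. \<forall>n\<ge>N. copnorm (\<lambda>x j. fc \<alpha> (Aop n) x j - fc \<alpha> (Aop 0) x j) = 1)"
    using copnorm_fc_step_Aop_diff_eq_1 by blast
  show "\<not> (\<forall>B\<in>SA. \<forall>\<epsilon>>0. \<exists>\<delta>>0. \<forall>C\<in>SA. gap_dist C B < \<delta> \<longrightarrow> riesz_dist C B < \<epsilon>)"
    by (rule gap_to_riesz_discontinuous[OF Aop_SA Aop_SA gap riesz_dist_Aop_LIMSEQ]) simp
qed

end
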